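(* Let $0<\alpha<1$, $\lambda\in\mathbb{R}$, $\tau>0$, and let $\{v^n\}_{n\ge0}$ be a real sequence. Then for every integer $n\ge1$, $$\mathcal{A}_t^{\alpha} v^{n}\cdot \delta_{t}^{\alpha,\lambda}v^n \geq \frac{1}{2}\Big[\frac{\alpha}{2}e^{\lambda \tau}+\Big(1-\frac{\alpha}{2}\Big)\Big] e^{-\frac{\alpha}{2}\lambda \tau} \delta_{t}^{\alpha,2\lambda} (v^n)^2+\frac{2-\alpha-e^{\lambda \tau}}{4}\tau^{\alpha}e^{-\frac{\alpha}{2}\lambda \tau}(\delta_{t}^{\alpha,\lambda}v^n)^2.$$ In particular, when $\alpha=1$ and $\lambda=0$, $$\frac{v^n+v^{n-1}}{2}\cdot\frac{v^n-v^{n-1}}{\tau}=\frac{(v^n)^2-(v^{n-1})^2}{2\tau}.$$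
   Context: $\mathcal{A}_t^{\alpha}v^n=(1-\frac{\alpha}{2})v^n+\frac{\alpha}{2}v^{n-1}$. $g_k^{\alpha}=(-1)^k\binom{\alpha}{k}$ are the coefficients of $(1-z)^{\alpha}=\sum_{k\ge0}g_k^{\alpha}z^k$, and for a constant $\mu$, $g_k^{\alpha,\mu}=e^{-(k-\frac{\alpha}{2})\mu\tau}g_k^{\alpha}$. For a sequence $\{w^n\}$, $\delta_t^{\alpha,\mu}w^n=\tau^{-\alpha}\sum_{k=0}^{n}g_k^{\alpha,\mu}w^{n-k}$; in particular $\delta_{t}^{\alpha,2\lambda}(v^n)^2=\tau^{-\alpha}\sum_{k=0}^{n}g_{k}^{\alpha,2\lambda}(v^{n-k})^2$. *)

theory Defs
  imports Complex_Main
begin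

definition avgA :: "real \<Rightarrow> (nat \<Rightarrow> real) \<Rightarrow> nat \<Rightarrow> real" where
  "avgA \<alpha> v n = (1 - \<alpha>/2) * v n + (\<alpha>/2) * v (n - 1)"

text \<open>g_k^alpha = (-1)^k binom(alpha,k), coefficients of (1-z)^alpha.\<close>
definition gcoef :: "real \<Rightarrow> nat \<Rightarrow> real" where
  "gcoef \<alpha> k = (-1) ^ k * (\<alpha> gchoose k)"

definition gcoef_mu :: "real \<Rightarrow> real \<Rightarrow> real \<Rightarrow> nat \<Rightarrow> real" where
  "gcoef_mu \<alpha> \<mu> \<tau> k = exp (- (real k - \<alpha>/2) * \<mu> * \<tau>) * gcoef \<alpha> k"

definition delta_t :: "real \<Rightarrow> real \<Rightarrow> real \<Rightarrow> (nat \<Rightarrow> real) \<Rightarrow> nat \<Rightarrow> real" where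
  "delta_t \<alpha> \<mu> \<tau> w n = \<tau> powr (- \<alpha>) * (\<Sum>k=0..n. gcoef_mu \<alpha> \<mu> \<tau> k * w (n - k))"

end

theory Submission
  imports Defs "HOL-Analysis.Convex"
begin

text \<open>
  Substituting u_k = exp(-k \<lambda> \<tau>) v^(n-k) turns both sides into one positive factor times
  expressions in the plain coefficients g_k. For 0 < \<alpha> < 1 we have g_0 = 1, g_1 = -\<alpha>,
  g_k < 0 for k \<ge> 1 and \<Sum>_(k\<le>n) g_k \<ge> 0, so the weights -g_k (k \<ge> 2) sum to at most 1 - \<alpha>,
  and weighted Cauchy-Schwarz bounds the tail Q = \<Sum>_(k\<ge>2) g_k u_k by Q^2 \<le> (1 - \<alpha>) R with
  R = \<Sum>_(k\<ge>2) (-g_k) u_k^2. What remains is an inequality in u_0, u_1, Q, R, which is a sum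
  of squares plus a positive multiple of R - Q^2/(1 - \<alpha>).
\<close>

lemma gcoef_0 [simp]: "gcoef \<alpha> 0 = 1"
  by (simp add: gcoef_def)

lemma gcoef_1 [simp]: "gcoef \<alpha> (Suc 0) = - \<alpha>"
  by (simp add: gcoef_def)

lemma gcoef_Suc: "gcoef \<alpha> (Suc k) = gcoef \<alpha> k * (real k - \<alpha>) / real (Suc k)"
proof -
  have "real (Suc k) * (\<alpha> gchoose Suc k) = (\<alpha> - real k) * (\<alpha> gchoose k)"
    using gbinomial_mult_1[of \<alpha> k] by (simp add: algebra_simps)
  then have "\<alpha> gchoose Suc k = (\<alpha> - real k) * (\<alpha> gchoose k) / real (Suc k)"
    by (simp add: eq_divide_eq mult.commute del: of_nat_Suc)
  then show ?thesis
    unfolding gcoef_def by (simp add: algebra_simps del: of_nat_Suc)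
qed

lemma gcoef_neg:
  assumes "0 < \<alpha>" "\<alpha> < 1" "1 \<le> k"
  shows "gcoef \<alpha> k < 0"
  using assms(3)
proof (induction k rule: dec_induct)
  case base
  then show ?case using assms(1) by simp
next
  case (step k)
  then have "0 < real k - \<alpha>" using assms(2) by simp
  with step.IH show ?case
    by (simp add: gcoef_Suc mult_neg_pos divide_neg_pos)
qed

lemma gcoef_one_eq_0: "2 \<le> k \<Longrightarrow> gcoef 1 k = 0"
  by (induction k rule: dec_induct) (simp_all add: gcoef_Suc numeral_2_eq_2)

lemma sum_gcoef: "\<alpha> \<noteq> 0 \<Longrightarrow> (\<Sum>k=0..n. gcoef \<alpha> k) = gcoef \<alpha> n * (real n - \<alpha>) / (- \<alpha>)"
proof (induction n)
  case 0
  then show ?case by simp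
next
  case (Suc n)
  then have "(\<Sum>k=0..Suc n. gcoef \<alpha> k) = gcoef \<alpha> n * (real n - \<alpha>) / (- \<alpha>) + gcoef \<alpha> (Suc n)"
    by simp
  also have "\<dots> = gcoef \<alpha> (Suc n) * (real (Suc n) - \<alpha>) / (- \<alpha>)"
    unfolding gcoef_Suc using Suc.prems by (simp add: divide_simps) (simp add: algebra_simps)
  finally show ?case .
qed

lemma sum_gcoef_nonneg:
  assumes "0 < \<alpha>" "\<alpha> < 1"
  shows "0 \<le> (\<Sum>k=0..n. gcoef \<alpha> k)"
proof (cases "n = 0")
  case False
  then have "gcoef \<alpha> n < 0" "0 < real n - \<alpha>"
    using gcoef_neg[OF assms] assms(2) by auto
  then have "gcoef \<alpha> n * (real n - \<alpha>) / \<alpha> \<le> 0"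
    using assms(1) by (simp add: mult_neg_pos divide_nonpos_pos less_imp_le)
  then show ?thesis using assms(1) sum_gcoef[of \<alpha> n] by simp
qed simp

lemma sum_gcoef_split:
  fixes f :: "nat \<Rightarrow> real"
  assumes "1 \<le> n"
  shows "(\<Sum>k=0..n. gcoef \<alpha> k * f k) = f 0 - \<alpha> * f 1 + (\<Sum>k=2..n. gcoef \<alpha> k * f k)"
proof -
  have "(\<Sum>k=0..n. gcoef \<alpha> k * f k) = f 0 + (\<Sum>k=Suc 0..n. gcoef \<alpha> k * f k)"
    by (subst sum.atLeast_Suc_atMost) simp_all
  also have "(\<Sum>k=Suc 0..n. gcoef \<alpha> k * f k) = - \<alpha> * f 1 + (\<Sum>k=Suc 1..n. gcoef \<alpha> k * f k)"
    using assms by (subst sum.atLeast_Suc_atMost) auto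
  finally show ?thesis by (simp add: numeral_2_eq_2)
qed

lemma Cauchy_Schwarz_weighted_sum:
  fixes w u :: "'a \<Rightarrow> real"
  assumes "\<And>k. k \<in> I \<Longrightarrow> 0 \<le> w k"
  shows "(\<Sum>k\<in>I. w k * u k)\<^sup>2 \<le> (\<Sum>k\<in>I. w k) * (\<Sum>k\<in>I. w k * (u k)\<^sup>2)"
proof -
  have "(\<Sum>k\<in>I. sqrt (w k) * (sqrt (w k) * u k))\<^sup>2
        \<le> (\<Sum>k\<in>I. (sqrt (w k))\<^sup>2) * (\<Sum>k\<in>I. (sqrt (w k) * u k)\<^sup>2)"
    by (rule Cauchy_Schwarz_ineq_sum)
  moreover have "(\<Sum>k\<in>I. sqrt (w k) * (sqrt (w k) * u k)) = (\<Sum>k\<in>I. w k * u k)"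
    using assms by (intro sum.cong) (auto simp: mult.assoc[symmetric])
  moreover have "(\<Sum>k\<in>I. (sqrt (w k) * u k)\<^sup>2) = (\<Sum>k\<in>I. w k * (u k)\<^sup>2)"
    using assms by (intro sum.cong) (auto simp: power_mult_distrib)
  ultimately show ?thesis
    using assms by (simp cong: sum.cong)
qed

lemma gcoef_tail_sq_le:
  fixes u :: "nat \<Rightarrow> real"
  assumes "0 < \<alpha>" "\<alpha> < 1" "1 \<le> n"
  shows "(\<Sum>k=2..n. gcoef \<alpha> k * u k)\<^sup>2 \<le> (1 - \<alpha>) * (\<Sum>k=2..n. - gcoef \<alpha> k * (u k)\<^sup>2)"
proof -
  have weights: "0 \<le> - gcoef \<alpha> k" if "k \<in> {2..n}" for k
    using gcoef_neg[OF assms(1,2), of k] that by simp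
  have "(\<Sum>k=0..n. gcoef \<alpha> k * 1) = 1 - \<alpha> + (\<Sum>k=2..n. gcoef \<alpha> k * 1)"
    using sum_gcoef_split[OF assms(3), of \<alpha> "\<lambda>_. 1"] by simp
  then have weight_sum: "(\<Sum>k=2..n. - gcoef \<alpha> k) \<le> 1 - \<alpha>"
    using sum_gcoef_nonneg[OF assms(1,2), of n] by (simp add: sum_negf)
  have "(\<Sum>k=2..n. gcoef \<alpha> k * u k)\<^sup>2 = (\<Sum>k=2..n. - gcoef \<alpha> k * u k)\<^sup>2"
    by (simp add: sum_negf)
  also have "\<dots> \<le> (\<Sum>k=2..n. - gcoef \<alpha> k) * (\<Sum>k=2..n. - gcoef \<alpha> k * (u k)\<^sup>2)"
    using weights by (rule Cauchy_Schwarz_weighted_sum)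
  also have "\<dots> \<le> (1 - \<alpha>) * (\<Sum>k=2..n. - gcoef \<alpha> k * (u k)\<^sup>2)"
    using weight_sum weights by (intro mult_right_mono sum_nonneg) (auto simp: mult_nonpos_nonneg)
  finally show ?thesis .
qed

lemma delta_t_eq_weighted_sum:
  "delta_t \<alpha> \<mu> \<tau> w n = \<tau> powr (- \<alpha>) * exp (\<alpha>/2 * \<mu> * \<tau>)
     * (\<Sum>k=0..n. gcoef \<alpha> k * (exp (- real k * \<mu> * \<tau>) * w (n - k)))"
proof -
  have "exp (- (real k - \<alpha>/2) * \<mu> * \<tau>) = exp (\<alpha>/2 * \<mu> * \<tau>) * exp (- real k * \<mu> * \<tau>)" for k
    by (simp add: exp_add[symmetric] algebra_simps)
  then show ?thesis
    unfolding delta_t_def gcoef_mu_def sum_distrib_left by (simp add: ac_simps)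
qed

lemma sos_inequality:
  fixes \<alpha> a u0 u1 Q R :: real
  assumes "0 < \<alpha>" "\<alpha> < 1" "0 < a" "Q\<^sup>2 \<le> (1 - \<alpha>) * R"
  shows "(\<alpha>/2 * a + (1 - \<alpha>/2)) / 2 * (u0\<^sup>2 - \<alpha> * u1\<^sup>2 - R)
           + (2 - \<alpha> - a) / 4 * (u0 - \<alpha> * u1 + Q)\<^sup>2
         \<le> ((1 - \<alpha>/2) * u0 + \<alpha>/2 * a * u1) * (u0 - \<alpha> * u1 + Q)"
proof -
  define c where "c = \<alpha>/2 * a + (1 - \<alpha>/2)"
  define q where "q = Q / (2 * (1 - \<alpha>))"
  have Q: "Q = 2 * (1 - \<alpha>) * q"
    using assms(2) unfolding q_def by simp
  have "(1 - \<alpha>) * (R - 4 * (1 - \<alpha>) * q\<^sup>2) \<ge> 0"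
    using assms(4) unfolding Q by (simp add: algebra_simps power2_eq_square)
  then have "R - 4 * (1 - \<alpha>) * q\<^sup>2 \<ge> 0"
    using assms(2) by (simp add: zero_le_mult_iff)
  moreover have "c > 0"
    using assms unfolding c_def by (simp add: add_pos_pos)
  ultimately have "0 \<le> a * (1 - \<alpha>) / 4 * (u0 + 2 * q)\<^sup>2
      + \<alpha> * (1 - \<alpha>) * (2 - \<alpha>) / 4 * (u1 + 2 * q)\<^sup>2 + c / 2 * (R - 4 * (1 - \<alpha>) * q\<^sup>2)"
    using assms by (intro add_nonneg_nonneg) simp_all
  also have "\<dots> = ((1 - \<alpha>/2) * u0 + \<alpha>/2 * a * u1) * (u0 - \<alpha> * u1 + Q)
      - c / 2 * (u0\<^sup>2 - \<alpha> * u1\<^sup>2 - R) - (2 - \<alpha> - a) / 4 * (u0 - \<alpha> * u1 + Q)\<^sup>2"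
    unfolding Q c_def by (simp add: field_simps power2_eq_square)
  finally show ?thesis
    unfolding c_def by linarith
qed

lemma avgA_mul_delta_t_ge:
  assumes "0 < \<alpha>" "\<alpha> < 1" "0 < \<tau>" "1 \<le> n"
  shows "1/2 * ((\<alpha>/2) * exp (lam * \<tau>) + (1 - \<alpha>/2)) * exp (- (\<alpha>/2) * lam * \<tau>)
             * delta_t \<alpha> (2 * lam) \<tau> (\<lambda>m. (v m)\<^sup>2) n
         + (2 - \<alpha> - exp (lam * \<tau>)) / 4 * \<tau> powr \<alpha> * exp (- (\<alpha>/2) * lam * \<tau>)
             * (delta_t \<alpha> lam \<tau> v n)\<^sup>2
         \<le> avgA \<alpha> v n * delta_t \<alpha> lam \<tau> v n"
proof -
  define a where "a = exp (lam * \<tau>)"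
  define E where "E = exp (\<alpha>/2 * lam * \<tau>)"
  define t where "t = \<tau> powr (- \<alpha>)"
  define u where "u k = exp (- real k * lam * \<tau>) * v (n - k)" for k
  define Q where "Q = (\<Sum>k=2..n. gcoef \<alpha> k * u k)"
  define R where "R = (\<Sum>k=2..n. - gcoef \<alpha> k * (u k)\<^sup>2)"
  have pos: "0 < a" "0 < E" "0 < t"
    unfolding a_def E_def t_def using assms(3) by auto
  have "v (n - 1) = a * u 1"
    unfolding u_def a_def by (simp add: exp_minus')
  then have avg: "avgA \<alpha> v n = (1 - \<alpha>/2) * u 0 + \<alpha>/2 * a * u 1"
    unfolding avgA_def u_def by simp
  have delta: "delta_t \<alpha> lam \<tau> v n = t * E * (u 0 - \<alpha> * u 1 + Q)"
    unfolding delta_t_eq_weighted_sum sum_gcoef_split[OF assms(4)] t_def E_def u_def Q_def ..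
  have u_sq: "exp (- real k * (2 * lam) * \<tau>) * (v (n - k))\<^sup>2 = (u k)\<^sup>2" for k
    unfolding u_def by (simp add: power_mult_distrib power2_eq_square mult_exp_exp)
  have E_sq: "exp (\<alpha>/2 * (2 * lam) * \<tau>) = E\<^sup>2"
    unfolding E_def by (simp add: power2_eq_square mult_exp_exp)
  have delta_sq: "delta_t \<alpha> (2 * lam) \<tau> (\<lambda>m. (v m)\<^sup>2) n
      = t * E\<^sup>2 * ((u 0)\<^sup>2 - \<alpha> * (u 1)\<^sup>2 - R)"
    unfolding delta_t_eq_weighted_sum u_sq E_sq sum_gcoef_split[OF assms(4)] t_def[symmetric] R_def
    by (simp add: sum_negf)
  have inv: "\<tau> powr \<alpha> = 1 / t" "exp (- (\<alpha>/2) * lam * \<tau>) = 1 / E"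
    unfolding t_def E_def using assms(3) by (simp_all add: powr_minus_divide exp_minus')
  define c where "c = \<alpha>/2 * a + (1 - \<alpha>/2)"
  define P where "P = u 0 - \<alpha> * u 1 + Q"
  have "1/2 * c * (1 / E) * (t * E\<^sup>2 * ((u 0)\<^sup>2 - \<alpha> * (u 1)\<^sup>2 - R))
          + (2 - \<alpha> - a) / 4 * (1 / t) * (1 / E) * (t * E * P)\<^sup>2
        = t * E * (c / 2 * ((u 0)\<^sup>2 - \<alpha> * (u 1)\<^sup>2 - R) + (2 - \<alpha> - a) / 4 * P\<^sup>2)"
    using pos by (simp add: field_simps power2_eq_square)
  also have "\<dots> \<le> t * E * (((1 - \<alpha>/2) * u 0 + \<alpha>/2 * a * u 1) * P)"
    using sos_inequality[OF assms(1,2) pos(1) gcoef_tail_sq_le[OF assms(1,2,4), of u],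
        folded Q_def R_def, of "u 0" "u 1"] pos
    unfolding c_def P_def by (intro mult_left_mono) simp_all
  finally show ?thesis
    unfolding avg delta delta_sq inv a_def[symmetric] c_def[symmetric] P_def[symmetric]
    by (simp add: ac_simps)
qed

lemma delta_t_one_zero:
  assumes "0 < \<tau>" "1 \<le> n"
  shows "delta_t 1 0 \<tau> v n = (v n - v (n - 1)) / \<tau>"
  using assms
  by (simp add: delta_t_eq_weighted_sum sum_gcoef_split gcoef_one_eq_0 powr_minus_divide)

theorem lemma4p2:
  fixes \<alpha> lam \<tau> :: real and v :: "nat \<Rightarrow> real" and n :: nat
  assumes "0 < \<alpha>" and "\<alpha> < 1" and "0 < \<tau>" and "1 \<le> n"
  shows "(avgA \<alpha> v n * delta_t \<alpha> lam \<tau> v n \<ge>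
           1/2 * ((\<alpha>/2) * exp (lam * \<tau>) + (1 - \<alpha>/2)) * exp (- (\<alpha>/2) * lam * \<tau>)
             * delta_t \<alpha> (2 * lam) \<tau> (\<lambda>m. (v m)\<^sup>2) n
         + (2 - \<alpha> - exp (lam * \<tau>)) / 4 * \<tau> powr \<alpha> * exp (- (\<alpha>/2) * lam * \<tau>)
             * (delta_t \<alpha> lam \<tau> v n)\<^sup>2)
       \<and> (avgA 1 v n * delta_t 1 0 \<tau> v n = (v n + v (n - 1)) / 2 * ((v n - v (n - 1)) / \<tau>)
         \<and> (v n + v (n - 1)) / 2 * ((v n - v (n - 1)) / \<tau>) = ((v n)\<^sup>2 - (v (n - 1))\<^sup>2) / (2 * \<tau>))"
proof (intro conjI avgA_mul_delta_t_ge[OF assms])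
  show "avgA 1 v n * delta_t 1 0 \<tau> v n = (v n + v (n - 1)) / 2 * ((v n - v (n - 1)) / \<tau>)"
    using assms(3,4) by (simp add: delta_t_one_zero avgA_def add_divide_distrib)
  show "(v n + v (n - 1)) / 2 * ((v n - v (n - 1)) / \<tau>) = ((v n)\<^sup>2 - (v (n - 1))\<^sup>2) / (2 * \<tau>)"
    by (simp add: field_simps power2_eq_square)
qed

end
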